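(* Let $\phi$ be a continuous decreasing margin function and suppose there are constants $a,c>0$ such that for every $\boldsymbol{x}\in\mathcal{X}$, every continuous $f$ and every $\eta\in[0,1]$, $C_\phi(\eta,\boldsymbol{x},f)-C^\star_\phi(\eta,\boldsymbol{x})\ge a\big(C_{\mathrm{class}}(\eta,\boldsymbol{x},f)-C^\star_{\mathrm{class}}(\eta,\boldsymbol{x})\big)$, and $\phi(0)-C^\star_\phi(\eta,\boldsymbol{x})\ge a\big(1-C^\star_{\mathrm{class}}(\eta,\boldsymbol{x})\big)$ whenever $|\eta-1/2|>c$. Let $\eta(\boldsymbol{x})=P(Y=1\mid X=\boldsymbol{x})$ and suppose $|\eta(\boldsymbol{x})-1/2|>c$ for all $\boldsymbol{x}\in\mathcal{X}$. Then for every continuous function $f$, $$\widetilde{\mathcal{R}}_P(f,\varepsilon)-\inf_{g\in\mathcal{H}^\alpha}\widetilde{\mathcal{R}}_P(g,\varepsilon)\ge a\big(\widetilde{\mathcal{R}}_{\mathrm{class},P}(f,\varepsilon)-\mathcal{R}^\star_{\mathrm{class},P}\big)-\inf_{g\in\mathcal{H}^\alpha}\widetilde{\mathcal{R}}_P(g,\varepsilon)+\mathcal{R}^\star_P.$$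
   Context: $\mathcal{X}\subseteq[0,1]^d$, $(X,Y)\sim P$ on $\mathcal{X}\times\{-1,1\}$, $\varepsilon>0$, $B_\varepsilon(\boldsymbol{x})=\{\boldsymbol{x}'\in\mathcal{X}:\|\boldsymbol{x}'-\boldsymbol{x}\|_\infty\le\varepsilon\}$. Margin-based loss $\ell(u,y)=\phi(uy)$. $\mathcal{R}_P(f)=\mathbb{E}\phi(f(X)Y)$, $\mathcal{R}_P^\star=\inf_{f\text{ measurable}}\mathcal{R}_P(f)$, $\widetilde{\mathcal{R}}_P(f,\varepsilon)=\mathbb{E}[\sup_{X'\in B_\varepsilon(X)}\phi(f(X')Y)]$. With $\operatorname{sign}(u)=1$ for $u\ge0$ and $-1$ otherwise: $\mathcal{R}_{\mathrm{class},P}(f)=P(\operatorname{sign}f(X)\ne Y)$, $\mathcal{R}^\star_{\mathrm{class},P}=\inf_{f\text{ measurable}}\mathcal{R}_{\mathrm{class},P}(f)$, $\widetilde{\mathcal{R}}_{\mathrm{class},P}(f,\varepsilon)=\mathbb{E}[\sup_{X'\in B_\varepsilon(X)}\mathbf{1}\{\operatorname{sign}f(X')\ne Y\}]$. $C_{\mathrm{class}}(\eta,\boldsymbol{x},f)=\mathbf{1}\{f(\boldsymbol{x})<0\}\eta+\mathbf{1}\{f(\boldsymbol{x})\ge0\}(1-\eta)$, $C^\star_{\mathrm{class}}(\eta,\boldsymbol{x})=\min\{\eta,1-\eta\}$, $C_\phi(\eta,\boldsymbol{x},f)=\phi(f(\boldsymbol{x}))\eta+\phi(-f(\boldsymbol{x}))(1-\eta)$,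 $C^\star_\phi(\eta,\boldsymbol{x})=\inf_{b\in\mathbb{R}}\{\phi(b)\eta+\phi(-b)(1-\eta)\}$. $\mathcal{H}^\alpha$ is the Hölder ball on $[0,1]^d$ of smoothness $\alpha=r+\beta$ (partial derivatives of order $\le r$ bounded by 1, order-$r$ derivatives $\beta$-Hölder with constant 1 in $\|\cdot\|_\infty$). *)

theory Defs
  imports "HOL-Analysis.Analysis" "HOL-Probability.Probability"
begin

definition unit_cube :: "(real ^ 'd) set" where
  "unit_cube = {x. \<forall>i. 0 \<le> x $ i \<and> x $ i \<le> 1}"

definition adv_ball :: "(real ^ 'd) set \<Rightarrow> real \<Rightarrow> real ^ 'd \<Rightarrow> (real ^ 'd) set" where
  "adv_ball XX eps x = {x' \<in> XX. infnorm (x' - x) \<le> eps}"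

definition sgn01 :: "real \<Rightarrow> real" where
  "sgn01 u = (if u \<ge> 0 then 1 else -1)"

definition C_class :: "real \<Rightarrow> real ^ 'd \<Rightarrow> (real ^ 'd \<Rightarrow> real) \<Rightarrow> real" where
  "C_class \<eta> x f = (if f x < 0 then 1 else 0) * \<eta> + (if f x \<ge> 0 then 1 else 0) * (1 - \<eta>)"

definition C_class_star :: "real \<Rightarrow> real ^ 'd \<Rightarrow> real" where
  "C_class_star \<eta> x = min \<eta> (1 - \<eta>)"

definition C_phi :: "(real \<Rightarrow> real) \<Rightarrow> real \<Rightarrow> real ^ 'd \<Rightarrow> (real ^ 'd \<Rightarrow> real) \<Rightarrow> real" where
  "C_phi \<phi> \<eta> x f = \<phi> (f x) * \<eta> + \<phi> (- f x) * (1 - \<eta>)"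

definition C_phi_star :: "(real \<Rightarrow> real) \<Rightarrow> real \<Rightarrow> real ^ 'd \<Rightarrow> real" where
  "C_phi_star \<phi> \<eta> x = (INF b\<in>(UNIV::real set). \<phi> b * \<eta> + \<phi> (- b) * (1 - \<eta>))"

text \<open>Risks for a distribution P on X x {-1,1} (labels stored as reals).
  Values are in ereal; the loss phi is nonnegative so expectations are nonnegative integrals.\<close>
definition risk :: "((real ^ 'd) \<times> real) measure \<Rightarrow> (real \<Rightarrow> real) \<Rightarrow> (real ^ 'd \<Rightarrow> real) \<Rightarrow> ereal" where
  "risk P \<phi> f = enn2ereal (\<integral>\<^sup>+ z. ennreal (\<phi> (f (fst z) * snd z)) \<partial>P)"

definition risk_star :: "((real ^ 'd) \<times> real) measure \<Rightarrow> (real \<Rightarrow> real) \<Rightarrow> ereal" where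
  "risk_star P \<phi> = (INF f\<in>borel_measurable borel. risk P \<phi> f)"

definition adv_risk :: "((real ^ 'd) \<times> real) measure \<Rightarrow> (real ^ 'd) set \<Rightarrow> (real \<Rightarrow> real)
    \<Rightarrow> (real ^ 'd \<Rightarrow> real) \<Rightarrow> real \<Rightarrow> ereal" where
  "adv_risk P XX \<phi> f eps = enn2ereal (\<integral>\<^sup>+ z.
      (SUP x'\<in>adv_ball XX eps (fst z). ennreal (\<phi> (f x' * snd z))) \<partial>P)"

definition class_risk :: "((real ^ 'd) \<times> real) measure \<Rightarrow> (real ^ 'd \<Rightarrow> real) \<Rightarrow> ereal" where
  "class_risk P f = enn2ereal (\<integral>\<^sup>+ z. ennreal (if sgn01 (f (fst z)) \<noteq> snd z then 1 else 0) \<partial>P)"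

definition class_risk_star :: "((real ^ 'd) \<times> real) measure \<Rightarrow> ereal" where
  "class_risk_star P = (INF f\<in>(borel_measurable borel :: (real ^ 'd \<Rightarrow> real) set). class_risk P f)"

definition adv_class_risk :: "((real ^ 'd) \<times> real) measure \<Rightarrow> (real ^ 'd) set
    \<Rightarrow> (real ^ 'd \<Rightarrow> real) \<Rightarrow> real \<Rightarrow> ereal" where
  "adv_class_risk P XX f eps = enn2ereal (\<integral>\<^sup>+ z.
      (SUP x'\<in>adv_ball XX eps (fst z). ennreal (if sgn01 (f x') \<noteq> snd z then 1 else 0)) \<partial>P)"

text \<open>Hoelder ball H^alpha on [0,1]^d, alpha = r + beta, 0 < beta <= 1.
  Partial derivative in coordinate i (one-sided at the boundary of the cube), iterated
  along a list of coordinate indices (applied from the end of the list first).\<close>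
definition has_pderiv :: "'d \<Rightarrow> (real ^ 'd \<Rightarrow> real) \<Rightarrow> real ^ 'd \<Rightarrow> real \<Rightarrow> bool" where
  "has_pderiv i g x D \<longleftrightarrow>
     ((\<lambda>t. g (x + t *\<^sub>R axis i 1)) has_real_derivative D)
       (at 0 within {t. x + t *\<^sub>R axis i 1 \<in> unit_cube})"

definition pderiv_cube :: "'d \<Rightarrow> (real ^ 'd \<Rightarrow> real) \<Rightarrow> real ^ 'd \<Rightarrow> real" where
  "pderiv_cube i g x = (THE D. has_pderiv i g x D)"

fun iter_pderiv :: "'d list \<Rightarrow> (real ^ 'd \<Rightarrow> real) \<Rightarrow> real ^ 'd \<Rightarrow> real" where
  "iter_pderiv [] g = g"
| "iter_pderiv (i # ks) g = pderiv_cube i (iter_pderiv ks g)"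

definition holder_ball :: "nat \<Rightarrow> real \<Rightarrow> (real ^ 'd \<Rightarrow> real) set" where
  "holder_ball r \<beta> = {g.
     (\<forall>ks i x. length ks < r \<longrightarrow> x \<in> unit_cube \<longrightarrow> (\<exists>D. has_pderiv i (iter_pderiv ks g) x D))
   \<and> (\<forall>ks x. length ks \<le> r \<longrightarrow> x \<in> unit_cube \<longrightarrow> \<bar>iter_pderiv ks g x\<bar> \<le> 1)
   \<and> (\<forall>ks x y. length ks = r \<longrightarrow> x \<in> unit_cube \<longrightarrow> y \<in> unit_cube \<longrightarrow>
        \<bar>iter_pderiv ks g x - iter_pderiv ks g y\<bar> \<le> infnorm (x - y) powr \<beta>)}"

end

theory Submission
  imports Defs
begin

text \<open>
  Disintegrating \<open>P\<close> along the label turns each risk into an integral over the marginal \<open>P\<^sub>X\<close> of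
  \<open>\<eta>(x) \<ell>(x, 1) + (1 - \<eta>(x)) \<ell>(x, -1)\<close>. So the Bayes \<open>\<phi>\<close>-risk is at most \<open>\<integral> C\<^sup>\<star>\<^sub>\<phi>(\<eta>) dP\<^sub>X\<close>
  (by a measurable near-minimiser over the rationals) and the Bayes classification risk is at least
  \<open>\<integral> min(\<eta>, 1 - \<eta>) dP\<^sub>X\<close>. The adversarial \<open>\<phi>\<close>-loss of \<open>f\<close> at \<open>(x, y)\<close> is at least \<open>\<phi>(f(x) y)\<close>,
  and at least \<open>\<phi>(0)\<close> whenever the \<open>\<epsilon>\<close>-ball around \<open>x\<close> contains a point misclassified by \<open>f\<close>.
  Against these two lower bounds the two calibration inequalities (the second applies everywhere
  thanks to the margin condition) give pointwise
  \<open>C\<^sup>\<star>\<^sub>\<phi> + a \<cdot> (adversarial 0-1 loss) \<le> adversarial \<phi>-loss + a min(\<eta>, 1 - \<eta>)\<close>, and integrating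
  gives \<open>R\<^sup>\<star>\<^sub>\<phi> + a \<tilde>R\<^sub>class(f) \<le> \<tilde>R\<^sub>\<phi>(f) + a R\<^sup>\<star>\<^sub>class\<close>, the claim after rearranging.
\<close>

lemma fst_borel_measurable[measurable]:
  "(fst :: 'a::topological_space \<times> 'b::topological_space \<Rightarrow> 'a) \<in> borel_measurable borel"
  by (intro borel_measurable_continuous_onI continuous_intros)

lemma snd_borel_measurable[measurable]:
  "(snd :: 'a::topological_space \<times> 'b::topological_space \<Rightarrow> 'b) \<in> borel_measurable borel"
  by (intro borel_measurable_continuous_onI continuous_intros)

lemma sgn01_borel_measurable[measurable]: "sgn01 \<in> borel_measurable borel"
  unfolding sgn01_def by measurable

lemma AE_nonneg_if_set_integrals_nonneg:
  fixes w :: "'a \<Rightarrow> real"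
  assumes M: "finite_measure M" and w[measurable]: "w \<in> borel_measurable M"
    and int_nonneg: "\<And>A. A \<in> sets M \<Longrightarrow> set_integrable M A w \<Longrightarrow> 0 \<le> (LINT x:A|M. w x)"
  shows "AE x in M. 0 \<le> w x"
proof -
  \<comment> \<open>\<open>w\<close> need not be integrable, so test on the sets where it is negative but bounded.\<close>
  define A where "A n = {x \<in> space M. - real n \<le> w x \<and> w x < 0}" for n
  have A_sets[measurable]: "A n \<in> sets M" for n
    unfolding A_def by measurable
  have "A n \<in> null_sets M" for n
  proof (rule null_if_pos_func_has_zero_int)
    have bounded: "AE x in M. norm (indicator (A n) x * w x) \<le> real n"
      by (rule AE_I2) (auto simp: A_def indicator_def)
    show int: "integrable M (\<lambda>x. - (indicator (A n) x * w x))"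
      using finite_measure.integrable_const_bound[OF M bounded] by simp
    show "AE x \<in> A n in M. 0 < - (indicator (A n) x * w x)"
      by (rule AE_I2) (simp add: A_def)
    have "(LINT x:A n|M. - (indicator (A n) x * w x)) = - (LINT x:A n|M. w x)"
      unfolding set_lebesgue_integral_def
      by (auto intro!: Bochner_Integration.integral_cong simp: indicator_def)
    moreover have "0 \<le> (LINT x:A n|M. w x)"
      using int by (intro int_nonneg) (simp_all add: set_integrable_def)
    moreover have "0 \<le> (LINT x:A n|M. - (indicator (A n) x * w x))"
      unfolding set_lebesgue_integral_def
      by (rule integral_nonneg_AE, rule AE_I2) (simp add: A_def indicator_def)
    ultimately show "(LINT x:A n|M. - (indicator (A n) x * w x)) = 0"
      by linarith
  qed measurable
  then have "AE x in M. \<forall>n. x \<notin> A n"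
    by (simp add: AE_all_countable AE_not_in)
  with AE_space show ?thesis
  proof eventually_elim
    case (elim x)
    have "- real (nat \<lceil>- w x\<rceil>) \<le> w x" by linarith
    then show "0 \<le> w x"
      using elim by (auto simp: A_def)
  qed
qed

lemma nn_integral_indicator_le_inner_measure:
  "(\<integral>\<^sup>+ x. (indicator A x :: ennreal) \<partial>M) \<le> (SUP S\<in>{S \<in> sets M. S \<subseteq> A}. emeasure M S)"
  unfolding nn_integral_def
proof (rule SUP_least)
  fix g :: "_ \<Rightarrow> ennreal" assume "g \<in> {g. simple_function M g \<and> g \<le> indicator A}"
  then have g: "simple_function M g" and g_le: "g \<le> indicator A"
    by auto
  define S where "S = {x \<in> space M. g x \<noteq> 0}"
  have [measurable]: "g \<in> borel_measurable M"
    using g by (rule borel_measurable_simple_function)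
  have S: "S \<in> sets M"
    unfolding S_def by measurable
  have g_le_A: "g x \<le> indicator A x" for x
    using g_le by (simp add: le_fun_def)
  have g_le_S: "g x \<le> indicator S x" if "x \<in> space M" for x
    using that g_le_A[of x] by (cases "x \<in> A") (auto simp: S_def indicator_def)
  have "S \<subseteq> A"
  proof
    fix x assume "x \<in> S"
    then show "x \<in> A"
      using g_le_A[of x] by (cases "x \<in> A") (auto simp: S_def)
  qed
  have "integral\<^sup>S M g \<le> integral\<^sup>S M (indicator S)"
    using g S g_le_S by (intro simple_integral_mono) auto
  also have "\<dots> = emeasure M S"
    using S by simp
  also have "\<dots> \<le> (SUP S\<in>{S \<in> sets M. S \<subseteq> A}. emeasure M S)"
    using S \<open>S \<subseteq> A\<close> by (intro SUP_upper) auto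
  finally show "integral\<^sup>S M g \<le> (SUP S\<in>{S \<in> sets M. S \<subseteq> A}. emeasure M S)" .
qed

lemma nn_integral_ennreal_add_scaled:
  fixes f g :: "'a \<Rightarrow> real"
  assumes [measurable]: "f \<in> borel_measurable M" "g \<in> borel_measurable M"
    and f_nonneg: "AE x in M. 0 \<le> f x" and g_nonneg: "AE x in M. 0 \<le> g x" and c: "0 \<le> c"
  shows "(\<integral>\<^sup>+ x. ennreal (f x) \<partial>M) + ennreal c * (\<integral>\<^sup>+ x. ennreal (g x) \<partial>M)
    = (\<integral>\<^sup>+ x. ennreal (f x + c * g x) \<partial>M)"
proof -
  have "(\<integral>\<^sup>+ x. ennreal (f x) \<partial>M) + ennreal c * (\<integral>\<^sup>+ x. ennreal (g x) \<partial>M)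
      = (\<integral>\<^sup>+ x. ennreal (f x) + ennreal c * ennreal (g x) \<partial>M)"
    by (simp add: nn_integral_cmult nn_integral_add)
  also have "\<dots> = (\<integral>\<^sup>+ x. ennreal (f x + c * g x) \<partial>M)"
  proof (rule nn_integral_cong_AE, use f_nonneg g_nonneg in eventually_elim)
    case (elim x)
    then show ?case
      using c by (simp add: ennreal_mult' ennreal_plus)
  qed
  finally show ?thesis .
qed

lemma SUP_ennreal_of_bool:
  "(SUP x\<in>X. ennreal (if Q x then 1 else 0)) = (if \<exists>x\<in>X. Q x then 1 else 0)"
proof (cases "\<exists>x\<in>X. Q x")
  case True
  then show ?thesis
    by (auto intro!: antisym SUP_least SUP_upper2)
next
  case False
  then show ?thesis
    by (auto intro!: antisym SUP_least)
qed

lemma ereal_excess_rearrange: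
  fixes X Y Z Z' R R' I :: ereal and a :: real
  assumes main: "R' + ereal a * Y \<le> X + ereal a * Z'"
    and R: "0 \<le> R" "R \<le> R'" "R' \<noteq> \<infinity>" and Z: "0 \<le> Z'" "Z' \<le> Z" "Z \<le> 1"
    and Y: "0 \<le> Y" "Y \<le> 1" and a: "0 < a" and X: "0 \<le> X" and I: "0 \<le> I"
  shows "ereal a * (Y - Z) - I + R \<le> X - I"
proof -
  obtain y where y: "Y = ereal y" using Y by (cases Y) auto
  obtain z where z: "Z = ereal z" using Z by (cases Z) auto
  obtain z' where z': "Z' = ereal z'" using Z by (cases Z') auto
  obtain r where r: "R = ereal r" using R by (cases R) auto
  obtain r' where r': "R' = ereal r'" using R by (cases R') auto
  have "a * z' \<le> a * z"
    using Z a unfolding z z' by (intro mult_left_mono) auto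
  then have real_case: "a * (y - z) + r \<le> x" if "r' + a * y \<le> x + a * z'" for x
    using that R unfolding r r' right_diff_distrib by simp
  show ?thesis
    using main X I real_case unfolding y z z' r r' by (cases X; cases I) auto
qed

lemma risk_star_nonneg: "0 \<le> risk_star P \<phi>"
  unfolding risk_star_def risk_def by (rule INF_greatest) simp

section \<open>Conditional risks\<close>

definition cond_risk :: "(real \<Rightarrow> real) \<Rightarrow> real \<Rightarrow> real \<Rightarrow> real" where
  "cond_risk \<phi> e b = \<phi> b * e + \<phi> (- b) * (1 - e)"

text \<open>
  Taking the infimum over the rationals makes \<open>min_cond_risk \<phi>\<close> Borel measurable; for continuous
  \<open>\<phi>\<close> it agrees with \<open>C_phi_star\<close> on \<open>[0, 1]\<close>.
\<close>

definition min_cond_risk :: "(real \<Rightarrow> real) \<Rightarrow> real \<Rightarrow> real" where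
  "min_cond_risk \<phi> e = (INF q\<in>\<rat>. cond_risk \<phi> e q)"

lemma cond_risk_nonneg: "(\<And>u. 0 \<le> \<phi> u) \<Longrightarrow> e \<in> {0..1} \<Longrightarrow> 0 \<le> cond_risk \<phi> e b"
  unfolding cond_risk_def by simp

lemma min_cond_risk_nonneg: "(\<And>u. 0 \<le> \<phi> u) \<Longrightarrow> e \<in> {0..1} \<Longrightarrow> 0 \<le> min_cond_risk \<phi> e"
  unfolding min_cond_risk_def by (intro cINF_greatest cond_risk_nonneg) (use Rats_0 in auto)

lemma min_cond_risk_le_cond_risk:
  "(\<And>u. 0 \<le> \<phi> u) \<Longrightarrow> e \<in> {0..1} \<Longrightarrow> q \<in> \<rat> \<Longrightarrow> min_cond_risk \<phi> e \<le> cond_risk \<phi> e q"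
proof -
  assume "\<And>u. 0 \<le> \<phi> u" "e \<in> {0..1}" "q \<in> \<rat>"
  then have "bdd_below (cond_risk \<phi> e ` \<rat>)"
    using cond_risk_nonneg[of \<phi>] by (auto simp: bdd_below_def)
  then show ?thesis
    unfolding min_cond_risk_def using \<open>q \<in> \<rat>\<close> by (rule cINF_lower)
qed

lemma continuous_on_cond_risk:
  assumes \<phi>: "continuous_on UNIV \<phi>"
  shows "continuous_on UNIV (cond_risk \<phi> e)"
proof -
  have "continuous_on UNIV (\<lambda>b. \<phi> (- b))"
    by (rule continuous_on_compose2[OF \<phi>]) (auto intro: continuous_intros)
  then show ?thesis
    unfolding cond_risk_def by (intro continuous_intros \<phi>)
qed

lemma INF_Rats_eq_INF:
  fixes g :: "real \<Rightarrow> real"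
  assumes g: "continuous_on UNIV g" and bdd: "bdd_below (range g)"
  shows "(INF q\<in>\<rat>. g q) = (INF b. g b)"
proof (rule antisym)
  have bdd_Rats: "bdd_below (g ` \<rat>)"
    by (rule bdd_below_mono[OF bdd]) auto
  have "g ` closure \<rat> \<subseteq> {(INF q\<in>\<rat>. g q)..}"
    by (intro image_closure_subset)
       (auto intro: continuous_on_subset[OF g] cINF_lower[OF bdd_Rats])
  then show "(INF q\<in>\<rat>. g q) \<le> (INF b. g b)"
    by (intro cINF_greatest) (auto simp: Rats_closure_real)
  show "(INF b. g b) \<le> (INF q\<in>\<rat>. g q)"
    using bdd by (intro cINF_superset_mono) auto
qed

lemma C_phi_star_eq_min_cond_risk:
  assumes "continuous_on UNIV \<phi>" "\<And>u. 0 \<le> \<phi> u" "e \<in> {0..1}"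
  shows "C_phi_star \<phi> e x = min_cond_risk \<phi> e"
proof -
  have "bdd_below (range (cond_risk \<phi> e))"
    using cond_risk_nonneg[of \<phi>, OF assms(2,3)] by (auto simp: bdd_below_def)
  then show ?thesis
    unfolding C_phi_star_def min_cond_risk_def
    using INF_Rats_eq_INF[OF continuous_on_cond_risk[OF assms(1)]] by (simp add: cond_risk_def)
qed

lemma borel_measurable_min_cond_risk:
  "\<phi> \<in> borel_measurable borel \<Longrightarrow> min_cond_risk \<phi> \<in> borel_measurable borel"
  unfolding min_cond_risk_def cond_risk_def by (measurable; simp add: countable_rat)

lemma measurable_near_minimizer:
  fixes \<eta> :: "'a \<Rightarrow> real"
  assumes \<phi>_cont: "continuous_on UNIV \<phi>" and \<phi>_nonneg: "\<And>u. 0 \<le> \<phi> u"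
    and \<eta>[measurable]: "\<eta> \<in> borel_measurable M" and \<delta>: "0 < \<delta>"
  obtains h where "h \<in> borel_measurable M"
    and "\<And>x. \<eta> x \<in> {0..1} \<Longrightarrow> cond_risk \<phi> (\<eta> x) (h x) < min_cond_risk \<phi> (\<eta> x) + \<delta>"
proof
  define q :: "nat \<Rightarrow> real" where "q = from_nat_into \<rat>"
  have range_q: "range q = \<rat>"
    unfolding q_def by (intro range_from_nat_into countable_rat) (use Rats_0 in blast)
  have \<phi>_meas[measurable]: "\<phi> \<in> borel_measurable borel"
    using \<phi>_cont by (rule borel_measurable_continuous_onI)
  define k where "k x = (LEAST k. cond_risk \<phi> (\<eta> x) (q k) < min_cond_risk \<phi> (\<eta> x) + \<delta>)" for x
  have [measurable]: "min_cond_risk \<phi> \<in> borel_measurable borel"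
    by (rule borel_measurable_min_cond_risk) measurable
  have "k \<in> measurable M (count_space UNIV)"
    unfolding k_def cond_risk_def by measurable
  then show "(\<lambda>x. q (k x)) \<in> borel_measurable M"
    by (rule measurable_compose) simp
  fix x assume x: "\<eta> x \<in> {0..1}"
  have bdd: "bdd_below (range (\<lambda>j. cond_risk \<phi> (\<eta> x) (q j)))"
    using cond_risk_nonneg[of \<phi>, OF \<phi>_nonneg x] by (auto simp: bdd_below_def)
  have "min_cond_risk \<phi> (\<eta> x) = (INF j. cond_risk \<phi> (\<eta> x) (q j))"
    unfolding min_cond_risk_def range_q[symmetric] by (simp add: image_comp)
  then have "\<exists>j. cond_risk \<phi> (\<eta> x) (q j) < min_cond_risk \<phi> (\<eta> x) + \<delta>"
    using cINF_less_iff[OF UNIV_not_empty bdd, of "min_cond_risk \<phi> (\<eta> x) + \<delta>"] \<delta> by simp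
  then show "cond_risk \<phi> (\<eta> x) (q (k x)) < min_cond_risk \<phi> (\<eta> x) + \<delta>"
    unfolding k_def by (rule LeastI_ex)
qed

text \<open>
  The pointwise inequality behind the theorem: \<open>e = \<eta>(x)\<close>, \<open>m = C\<^sup>\<star>\<^sub>\<phi>(e)\<close>, \<open>u = \<phi>(F)\<close>,
  \<open>v = \<phi>(-F)\<close>, \<open>p = \<phi>(0)\<close>, and \<open>s\<close>, \<open>t\<close> say whether \<open>(x, 1)\<close>, \<open>(x, -1)\<close> can be attacked.
\<close>

lemma calibrated_mixture_bound:
  fixes e a m u v p F :: real and s t :: bool
  assumes e: "0 \<le> e" "e \<le> 1" and a: "0 \<le> a"
    and cal1: "a * ((if F < 0 then e else 1 - e) - min e (1 - e)) \<le> u * e + v * (1 - e) - m"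
    and cal2: "a * (1 - min e (1 - e)) \<le> p - m"
    and mono: "F < 0 \<Longrightarrow> p \<le> u" "0 \<le> F \<Longrightarrow> p \<le> v"
  shows "m + a * (e * of_bool s + (1 - e) * of_bool t)
    \<le> e * (if s then max u p else u) + (1 - e) * (if t then max v p else v) + a * min e (1 - e)"
proof -
  define U where "U = (if s then max u p else u)"
  define V where "V = (if t then max v p else v)"
  have uv: "e * u + (1 - e) * v \<le> e * U + (1 - e) * V"
    unfolding U_def V_def using e by (intro add_mono mult_left_mono) auto
  have hit: "e * of_bool s + (1 - e) * of_bool t \<le> 1"
    using e by (cases s; cases t) auto
  consider "p \<le> U" "p \<le> V" | "\<not> s" "0 \<le> F" | "\<not> t" "F < 0"
    using mono unfolding U_def V_def by (cases s; cases t; cases "F < 0") auto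
  then show ?thesis
  proof cases
    case 1
    have "e * p + (1 - e) * p \<le> e * U + (1 - e) * V"
      using 1 e by (intro add_mono mult_left_mono) auto
    moreover have "a * (e * of_bool s + (1 - e) * of_bool t) \<le> a"
      using mult_left_mono[OF hit a] by simp
    ultimately show ?thesis
      using cal2 unfolding U_def V_def by (simp add: algebra_simps)
  next
    case 2
    have "a * ((1 - e) * of_bool t) \<le> a * (1 - e)"
      using a e by (intro mult_left_mono) auto
    then show ?thesis
      using 2 cal1 uv unfolding U_def V_def by (simp add: algebra_simps)
  next
    case 3
    have "a * (e * of_bool s) \<le> a * e"
      using a e by (intro mult_left_mono) auto
    then show ?thesis
      using 3 cal1 uv unfolding U_def V_def by (simp add: algebra_simps)
  qed
qed

section \<open>Disintegration along the label\<close>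

locale regression_function =
  fixes P :: "('a::second_countable_topology \<times> real) measure" and \<eta> :: "'a \<Rightarrow> real"
  assumes prob_space_P: "prob_space P"
    and sets_P: "sets P = sets borel"
    and labels: "AE z in P. snd z \<in> {-1, 1}"
    and eta_measurable[measurable]: "\<eta> \<in> borel_measurable borel"
    and eta_cond: "\<And>A. A \<in> sets borel \<Longrightarrow>
        measure P {z \<in> space P. fst z \<in> A \<and> snd z = 1} = (LINT x:A | distr P borel fst. \<eta> x)"
begin

abbreviation PX :: "'a measure" where "PX \<equiv> distr P borel fst"

lemma space_P[simp]: "space P = UNIV"
  using sets_eq_imp_space_eq[OF sets_P] by simp

lemma measurable_P_eq: "measurable P = measurable borel"
  by (intro ext measurable_cong_sets[OF sets_P refl])

lemma fst_measurable_P[measurable]: "fst \<in> borel_measurable P"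
  unfolding measurable_P_eq by measurable

lemma snd_measurable_P[measurable]: "snd \<in> borel_measurable P"
  unfolding measurable_P_eq by measurable

lemma sets_fst_vimage: "A \<in> sets borel \<Longrightarrow> {z. fst z \<in> A} \<in> sets P"
  using measurable_sets[OF fst_measurable_P] by (simp add: vimage_def)

lemma prob_space_PX: "prob_space PX"
  using prob_space_P by (rule prob_space.prob_space_distr) simp

lemma finite_measure_P: "finite_measure P"
  using prob_space_P by (rule prob_space.finite_measure)

lemma finite_measure_PX: "finite_measure PX"
  using prob_space_PX by (rule prob_space.finite_measure)

lemma measure_PX: "A \<in> sets borel \<Longrightarrow> measure PX A = measure P {z \<in> space P. fst z \<in> A}"
  by (subst measure_distr) (auto simp: vimage_def)

lemma AE_eta_in_unit: "AE x in PX. 0 \<le> \<eta> x \<and> \<eta> x \<le> 1"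
proof -
  have "AE x in PX. 0 \<le> \<eta> x"
  proof (rule AE_nonneg_if_set_integrals_nonneg[OF finite_measure_PX])
    fix A assume "A \<in> sets PX"
    then show "0 \<le> (LINT x:A|PX. \<eta> x)"
      by (simp flip: eta_cond)
  qed simp
  moreover have "AE x in PX. 0 \<le> 1 - \<eta> x"
  proof (rule AE_nonneg_if_set_integrals_nonneg[OF finite_measure_PX])
    fix A assume "A \<in> sets PX" and int: "set_integrable PX A (\<lambda>x. 1 - \<eta> x)"
    then have A[measurable]: "A \<in> sets borel" by simp
    have int_1: "set_integrable PX A (\<lambda>_. 1::real)"
      unfolding set_integrable_def using A finite_measure_PX
      by (intro integrable_mult_indicator) (auto simp: finite_measure.integrable_const)
    have "set_integrable PX A \<eta>"
      using set_integral_diff(1)[OF int_1 int] by simp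
    then have "(LINT x:A|PX. 1 - \<eta> x) = measure PX A - (LINT x:A|PX. \<eta> x)"
      using set_integral_diff(2)[OF int_1 \<open>set_integrable PX A \<eta>\<close>] A finite_measure_PX
      by (simp add: set_integral_const finite_measure.emeasure_finite)
    also have "\<dots> = measure P {z \<in> space P. fst z \<in> A} - measure P {z \<in> space P. fst z \<in> A \<and> snd z = 1}"
      using A by (simp add: measure_PX eta_cond[symmetric])
    also have "\<dots> \<ge> 0"
      using finite_measure_P sets_fst_vimage[OF A]
      by (intro diff_ge_0_iff_ge[THEN iffD2] finite_measure.finite_measure_mono) auto
    finally show "0 \<le> (LINT x:A|PX. 1 - \<eta> x)" .
  qed simp
  ultimately show ?thesis by eventually_elim simp
qed

lemma distr_label_density:
  assumes w[measurable]: "w \<in> borel_measurable borel"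
    and w_unit: "AE x in PX. 0 \<le> w x \<and> w x \<le> 1"
    and w_cond: "\<And>A. A \<in> sets borel \<Longrightarrow>
        measure P {z \<in> space P. fst z \<in> A \<and> snd z = c} = (LINT x:A|PX. w x)"
  shows "distr (density P (indicator {z. snd z = c})) borel fst = density PX (\<lambda>x. ennreal (w x))"
proof (rule measure_eqI)
  fix A assume "A \<in> sets (distr (density P (indicator {z. snd z = c})) borel fst)"
  then have A[measurable]: "A \<in> sets borel" by simp
  have A_c: "{z \<in> space P. fst z \<in> A \<and> snd z = c} \<in> sets P" by measurable
  have int: "integrable PX (\<lambda>x. indicator A x * w x)"
  proof (rule finite_measure.integrable_const_bound[OF finite_measure_PX, where B=1])
    show "AE x in PX. norm (indicator A x * w x) \<le> 1"
      using w_unit by eventually_elim (auto simp: indicator_def)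
  qed measurable
  have "emeasure (distr (density P (indicator {z. snd z = c})) borel fst) A
      = (\<integral>\<^sup>+ z. indicator {z \<in> space P. fst z \<in> A \<and> snd z = c} z \<partial>P)"
    using measurable_sets[OF fst_measurable_P A]
    by (simp add: emeasure_distr emeasure_density) (auto intro!: nn_integral_cong simp: indicator_def)
  also have "\<dots> = ennreal (LINT x:A|PX. w x)"
    using A_c finite_measure_P w_cond[OF A] by (simp add: finite_measure.emeasure_eq_measure)
  also have "\<dots> = (\<integral>\<^sup>+ x. ennreal (indicator A x * w x) \<partial>PX)"
  proof -
    have "AE x in PX. 0 \<le> indicator A x * w x"
      using w_unit by eventually_elim (simp add: indicator_def)
    then show ?thesis
      by (simp add: set_lebesgue_integral_def nn_integral_eq_integral[OF int])
  qed
  also have "\<dots> = (\<integral>\<^sup>+ x. ennreal (w x) * indicator A x \<partial>PX)"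
    by (intro nn_integral_cong) (simp add: indicator_def)
  also have "\<dots> = emeasure (density PX (\<lambda>x. ennreal (w x))) A"
    by (simp add: emeasure_density)
  finally show "emeasure (distr (density P (indicator {z. snd z = c})) borel fst) A
      = emeasure (density PX (\<lambda>x. ennreal (w x))) A" .
qed simp

lemma distr_label_1:
  "distr (density P (indicator {z. snd z = 1})) borel fst = density PX (\<lambda>x. ennreal (\<eta> x))"
  by (rule distr_label_density) (use AE_eta_in_unit eta_cond in auto)

lemma distr_label_minus_1:
  "distr (density P (indicator {z. snd z = -1})) borel fst = density PX (\<lambda>x. ennreal (1 - \<eta> x))"
proof (rule distr_label_density)
  show "AE x in PX. 0 \<le> 1 - \<eta> x \<and> 1 - \<eta> x \<le> 1"
    using AE_eta_in_unit by eventually_elim simp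
  fix A :: "'a set" assume A[measurable]: "A \<in> sets borel"
  have sets: "{z \<in> space P. fst z \<in> A \<and> snd z = c} \<in> sets P" for c :: real
    by measurable
  have "measure PX A
      = measure P ({z \<in> space P. fst z \<in> A \<and> snd z = 1} \<union> {z \<in> space P. fst z \<in> A \<and> snd z = -1})"
    unfolding measure_PX[OF A]
  proof (rule measure_eq_AE)
    show "AE z in P. z \<in> {z \<in> space P. fst z \<in> A}
        \<longleftrightarrow> z \<in> {z \<in> space P. fst z \<in> A \<and> snd z = 1} \<union> {z \<in> space P. fst z \<in> A \<and> snd z = -1}"
      using labels by eventually_elim auto
  qed (use sets sets_fst_vimage[OF A] in auto)
  also have "\<dots> = measure P {z \<in> space P. fst z \<in> A \<and> snd z = 1}
      + measure P {z \<in> space P. fst z \<in> A \<and> snd z = -1}"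
    using sets by (intro finite_measure.finite_measure_Union[OF finite_measure_P]) auto
  finally have "measure P {z \<in> space P. fst z \<in> A \<and> snd z = -1} = measure PX A - (LINT x:A|PX. \<eta> x)"
    using eta_cond[OF A] by simp
  also have "\<dots> = (LINT x:A|PX. 1 - \<eta> x)"
  proof -
    have int_1: "set_integrable PX A (\<lambda>_. 1::real)"
      unfolding set_integrable_def using finite_measure_PX
      by (intro integrable_mult_indicator) (auto simp: finite_measure.integrable_const)
    have "set_integrable PX A \<eta>"
      unfolding set_integrable_def
    proof (rule finite_measure.integrable_const_bound[OF finite_measure_PX, where B=1])
      show "AE x in PX. norm (indicator A x *\<^sub>R \<eta> x) \<le> 1"
        using AE_eta_in_unit by eventually_elim (auto simp: indicator_def)
    qed measurable
    then show ?thesis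
      using set_integral_diff(2)[OF int_1] A finite_measure_PX
      by (simp add: set_integral_const finite_measure.emeasure_finite)
  qed
  finally show "measure P {z \<in> space P. fst z \<in> A \<and> snd z = -1} = (LINT x:A|PX. 1 - \<eta> x)" .
qed simp

lemma AE_fst_in_borel_subset:
  assumes "AE z in P. fst z \<in> X"
  obtains B where "B \<in> sets borel" "B \<subseteq> X" "AE z in P. fst z \<in> B" "AE x in PX. x \<in> B"
proof -
  obtain N where N: "{z \<in> space P. fst z \<notin> X} \<subseteq> N" "N \<in> sets P" and "emeasure P N = 0"
    using assms by (auto elim!: AE_E)
  then have "AE z in P. z \<notin> N"
    by (intro AE_not_in) (simp add: null_sets_def)
  have [measurable]: "N \<in> sets borel"
    using N(2) sets_P by simp
  define B where "B = {x. (x, 1) \<notin> N \<or> (x, -1) \<notin> N}"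
  have B: "B \<in> sets borel"
  proof -
    have "{x \<in> space borel. (x, 1::real) \<notin> N \<or> (x, -1::real) \<notin> N} \<in> sets borel"
      by measurable
    then show ?thesis
      by (simp add: B_def)
  qed
  moreover have "B \<subseteq> X"
    using N(1) by (force simp: B_def)
  moreover have AE_B: "AE z in P. fst z \<in> B"
    using \<open>AE z in P. z \<notin> N\<close> labels
  proof eventually_elim
    case (elim z)
    then show ?case
      by (cases z) (auto simp: B_def)
  qed
  moreover have "AE x in PX. x \<in> B"
    using AE_B B by (subst AE_distr_iff) auto
  ultimately show ?thesis
    using that by blast
qed

lemma enn2ereal_nn_integral_le_1:
  assumes "\<And>z. g z \<le> 1"
  shows "enn2ereal (\<integral>\<^sup>+ z. g z \<partial>P) \<le> 1"
proof -
  have "(\<integral>\<^sup>+ z. g z \<partial>P) \<le> (\<integral>\<^sup>+ z. 1 \<partial>P)"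
    using assms by (intro nn_integral_mono) simp
  also have "\<dots> = 1"
    using prob_space.emeasure_space_1[OF prob_space_P] by simp
  finally show ?thesis
    by (simp add: less_eq_ennreal.rep_eq one_ennreal.rep_eq)
qed

lemma nn_integral_min_cond_risk_finite:
  assumes "\<And>u. 0 \<le> \<phi> u"
  shows "(\<integral>\<^sup>+ x. ennreal (min_cond_risk \<phi> (\<eta> x)) \<partial>PX) < \<infinity>"
proof -
  have "(\<integral>\<^sup>+ x. ennreal (min_cond_risk \<phi> (\<eta> x)) \<partial>PX) \<le> (\<integral>\<^sup>+ x. ennreal (\<phi> 0) \<partial>PX)"
  proof (rule nn_integral_mono_AE, use AE_eta_in_unit in eventually_elim)
    case (elim x)
    then show ?case
      using min_cond_risk_le_cond_risk[of \<phi>, OF assms, of "\<eta> x" 0]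
      by (intro ennreal_leI) (simp add: cond_risk_def algebra_simps)
  qed
  also have "\<dots> = ennreal (\<phi> 0)"
    using prob_space.emeasure_space_1[OF prob_space_PX] by simp
  finally show ?thesis
    using order.strict_trans1 by fastforce
qed

lemma nn_integral_disintegrate:
  fixes w :: "_ \<times> real \<Rightarrow> ennreal"
  assumes w[measurable]: "w \<in> borel_measurable borel"
  shows "(\<integral>\<^sup>+ z. w z \<partial>P) = (\<integral>\<^sup>+ x. ennreal (\<eta> x) * w (x, 1) + ennreal (1 - \<eta> x) * w (x, -1) \<partial>PX)"
proof -
  have w_P[measurable]: "w \<in> borel_measurable P"
    unfolding measurable_P_eq by (rule w)
  have label_part: "(\<integral>\<^sup>+ z. indicator {z. snd z = c} z * w (fst z, c) \<partial>P) = (\<integral>\<^sup>+ x. v x * w (x, c) \<partial>PX)"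
    if distr_eq: "distr (density P (indicator {z. snd z = c})) borel fst = density PX v"
      and [measurable]: "v \<in> borel_measurable borel" for c v
  proof -
    have "(\<integral>\<^sup>+ z. indicator {z. snd z = c} z * w (fst z, c) \<partial>P)
        = (\<integral>\<^sup>+ z. w (fst z, c) \<partial>density P (indicator {z. snd z = c}))"
      by (rule nn_integral_density[symmetric]) measurable
    also have "\<dots> = (\<integral>\<^sup>+ x. w (x, c) \<partial>distr (density P (indicator {z. snd z = c})) borel fst)"
      by (rule nn_integral_distr[symmetric]) measurable
    also have "\<dots> = (\<integral>\<^sup>+ x. v x * w (x, c) \<partial>PX)"
      unfolding distr_eq by (rule nn_integral_density) measurable
    finally show ?thesis .
  qed
  have "(\<integral>\<^sup>+ z. w z \<partial>P)
      = (\<integral>\<^sup>+ z. indicator {z. snd z = 1} z * w (fst z, 1) + indicator {z. snd z = -1} z * w (fst z, -1) \<partial>P)"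
  proof (rule nn_integral_cong_AE, use labels in eventually_elim)
    case (elim z)
    then show ?case
      by (cases z) auto
  qed
  also have "\<dots> = (\<integral>\<^sup>+ z. indicator {z. snd z = 1} z * w (fst z, 1) \<partial>P)
      + (\<integral>\<^sup>+ z. indicator {z. snd z = -1} z * w (fst z, -1) \<partial>P)"
    by (rule nn_integral_add) measurable
  also have "\<dots> = (\<integral>\<^sup>+ x. ennreal (\<eta> x) * w (x, 1) \<partial>PX) + (\<integral>\<^sup>+ x. ennreal (1 - \<eta> x) * w (x, -1) \<partial>PX)"
    using label_part[OF distr_label_1] label_part[OF distr_label_minus_1] by simp
  also have "\<dots> = (\<integral>\<^sup>+ x. ennreal (\<eta> x) * w (x, 1) + ennreal (1 - \<eta> x) * w (x, -1) \<partial>PX)"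
    by (rule nn_integral_add[symmetric]) measurable
  finally show ?thesis .
qed

lemma nn_integral_disintegrate_real:
  fixes w :: "_ \<times> real \<Rightarrow> real"
  assumes w[measurable]: "w \<in> borel_measurable borel" and w_nonneg: "\<And>z. 0 \<le> w z"
  shows "(\<integral>\<^sup>+ z. ennreal (w z) \<partial>P) = (\<integral>\<^sup>+ x. ennreal (\<eta> x * w (x, 1) + (1 - \<eta> x) * w (x, -1)) \<partial>PX)"
proof -
  have "(\<integral>\<^sup>+ z. ennreal (w z) \<partial>P)
      = (\<integral>\<^sup>+ x. ennreal (\<eta> x) * ennreal (w (x, 1)) + ennreal (1 - \<eta> x) * ennreal (w (x, -1)) \<partial>PX)"
    by (rule nn_integral_disintegrate) measurable
  also have "\<dots> = (\<integral>\<^sup>+ x. ennreal (\<eta> x * w (x, 1) + (1 - \<eta> x) * w (x, -1)) \<partial>PX)"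
  proof (rule nn_integral_cong_AE, use AE_eta_in_unit in eventually_elim)
    case (elim x)
    then show ?case
      by (simp add: w_nonneg ennreal_mult)
  qed
  finally show ?thesis .
qed

end

section \<open>The calibration bound for the adversarial risk\<close>

lemma self_mem_adv_ball: "x \<in> XX \<Longrightarrow> 0 \<le> eps \<Longrightarrow> x \<in> adv_ball XX eps x"
  by (simp add: adv_ball_def infnorm_0)

lemma phi_0_le_adv_loss:
  assumes \<phi>: "antimono \<phi>" and y: "y \<in> {-1, 1}"
    and x': "x' \<in> adv_ball XX eps x" "sgn01 (f x') \<noteq> y"
  shows "ennreal (\<phi> 0) \<le> (SUP x'\<in>adv_ball XX eps x. ennreal (\<phi> (f x' * y)))"
proof -
  have "f x' * y \<le> 0"
    using y x'(2) by (auto simp: sgn01_def split: if_splits)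
  then have "ennreal (\<phi> 0) \<le> ennreal (\<phi> (f x' * y))"
    using \<phi> by (intro ennreal_leI) (auto simp: antimono_def)
  also have "\<dots> \<le> (SUP x'\<in>adv_ball XX eps x. ennreal (\<phi> (f x' * y)))"
    using x'(1) by (rule SUP_upper)
  finally show ?thesis .
qed

text \<open>The risks of the setup are only defined for inputs in \<open>real ^ 'd\<close>.\<close>

locale regression_function_vector = regression_function P \<eta>
  for P :: "((real ^ 'd) \<times> real) measure" and \<eta> :: "real ^ 'd \<Rightarrow> real"
begin

lemma risk_eq_nn_integral_cond_risk:
  assumes [measurable]: "\<phi> \<in> borel_measurable borel" "h \<in> borel_measurable borel"
    and \<phi>_nonneg: "\<And>u. 0 \<le> \<phi> u"
  shows "risk P \<phi> h = enn2ereal (\<integral>\<^sup>+ x. ennreal (cond_risk \<phi> (\<eta> x) (h x)) \<partial>PX)"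
  unfolding risk_def
  using nn_integral_disintegrate_real[of "\<lambda>z. \<phi> (h (fst z) * snd z)"] \<phi>_nonneg
  by (simp add: cond_risk_def mult.commute)

lemma risk_star_le_nn_integral_min_cond_risk:
  assumes \<phi>_cont: "continuous_on UNIV \<phi>" and \<phi>_nonneg: "\<And>u. 0 \<le> \<phi> u"
  shows "risk_star P \<phi> \<le> enn2ereal (\<integral>\<^sup>+ x. ennreal (min_cond_risk \<phi> (\<eta> x)) \<partial>PX)"
proof (rule ereal_le_epsilon2)
  fix \<delta> :: real assume \<delta>: "0 < \<delta>"
  have \<phi>_meas[measurable]: "\<phi> \<in> borel_measurable borel"
    using \<phi>_cont by (rule borel_measurable_continuous_onI)
  have [measurable]: "min_cond_risk \<phi> \<in> borel_measurable borel"
    by (rule borel_measurable_min_cond_risk) measurable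
  obtain h where h[measurable]: "h \<in> borel_measurable borel"
    and h_near: "\<And>x. \<eta> x \<in> {0..1} \<Longrightarrow> cond_risk \<phi> (\<eta> x) (h x) < min_cond_risk \<phi> (\<eta> x) + \<delta>"
    using measurable_near_minimizer[OF \<phi>_cont \<phi>_nonneg eta_measurable \<delta>] by blast
  have "risk_star P \<phi> \<le> risk P \<phi> h"
    unfolding risk_star_def by (rule INF_lower) simp
  also have "\<dots> = enn2ereal (\<integral>\<^sup>+ x. ennreal (cond_risk \<phi> (\<eta> x) (h x)) \<partial>PX)"
    by (rule risk_eq_nn_integral_cond_risk) (simp_all add: \<phi>_nonneg)
  also have "\<dots> \<le> enn2ereal (\<integral>\<^sup>+ x. ennreal (min_cond_risk \<phi> (\<eta> x)) + ennreal \<delta> \<partial>PX)"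
    unfolding less_eq_ennreal.rep_eq[symmetric]
  proof (intro nn_integral_mono_AE, use AE_eta_in_unit in eventually_elim)
    case (elim x)
    then show ?case
      using h_near[of x] min_cond_risk_nonneg[of \<phi>, OF \<phi>_nonneg, of "\<eta> x"] \<delta>
      by (simp flip: ennreal_plus add: ennreal_leI)
  qed
  also have "\<dots> = enn2ereal (\<integral>\<^sup>+ x. ennreal (min_cond_risk \<phi> (\<eta> x)) \<partial>PX) + ereal \<delta>"
    using prob_space.emeasure_space_1[OF prob_space_PX] \<delta>
    by (simp add: nn_integral_add plus_ennreal.rep_eq)
  finally show "risk_star P \<phi> \<le> enn2ereal (\<integral>\<^sup>+ x. ennreal (min_cond_risk \<phi> (\<eta> x)) \<partial>PX) + ereal \<delta>" .
qed

lemma nn_integral_min_eta_le_class_risk_star: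
  "enn2ereal (\<integral>\<^sup>+ x. ennreal (min (\<eta> x) (1 - \<eta> x)) \<partial>PX) \<le> class_risk_star P"
  unfolding class_risk_star_def
proof (rule INF_greatest)
  fix h :: "real ^ 'd \<Rightarrow> real" assume [measurable]: "h \<in> borel_measurable borel"
  let ?loss = "\<lambda>z. if sgn01 (h (fst z)) \<noteq> snd z then 1 else 0 :: real"
  have loss_meas: "?loss \<in> borel_measurable borel"
    by measurable
  have "(\<integral>\<^sup>+ x. ennreal (min (\<eta> x) (1 - \<eta> x)) \<partial>PX)
      \<le> (\<integral>\<^sup>+ x. ennreal (\<eta> x * ?loss (x, 1) + (1 - \<eta> x) * ?loss (x, -1)) \<partial>PX)"
    by (intro nn_integral_mono_AE ennreal_leI AE_I2) (simp add: sgn01_def)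
  also have "\<dots> = (\<integral>\<^sup>+ z. ennreal (?loss z) \<partial>P)"
    by (rule nn_integral_disintegrate_real[OF loss_meas, symmetric]) simp
  finally show "enn2ereal (\<integral>\<^sup>+ x. ennreal (min (\<eta> x) (1 - \<eta> x)) \<partial>PX) \<le> class_risk P h"
    unfolding class_risk_def less_eq_ennreal.rep_eq[symmetric] .
qed

lemma adv_class_risk_le_1: "adv_class_risk P XX f eps \<le> 1"
  unfolding adv_class_risk_def by (rule enn2ereal_nn_integral_le_1) (simp add: SUP_least)

lemma class_risk_star_le_1: "class_risk_star P \<le> 1"
proof -
  have "class_risk_star P \<le> class_risk P (\<lambda>_. 0)"
    unfolding class_risk_star_def by (rule INF_lower) simp
  also have "\<dots> \<le> 1"
    unfolding class_risk_def by (rule enn2ereal_nn_integral_le_1) simp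
  finally show ?thesis .
qed

end

locale calibrated_adversarial_setting = regression_function_vector P \<eta>
  for P :: "((real ^ 'd) \<times> real) measure" and \<eta> +
  fixes XX :: "(real ^ 'd) set" and eps a :: real and \<phi> :: "real \<Rightarrow> real" and f :: "real ^ 'd \<Rightarrow> real"
  assumes P_X: "AE z in P. fst z \<in> XX"
    and eps_nonneg: "0 \<le> eps"
    and phi_cont: "continuous_on UNIV \<phi>"
    and phi_nonneg: "\<And>u. 0 \<le> \<phi> u"
    and phi_antimono: "antimono \<phi>"
    and a_nonneg: "0 \<le> a"
    and f_cont: "continuous_on XX f"
    and calib_f: "\<And>x. x \<in> XX \<Longrightarrow> \<eta> x \<in> {0..1} \<Longrightarrow>
        a * ((if f x < 0 then \<eta> x else 1 - \<eta> x) - min (\<eta> x) (1 - \<eta> x))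
          \<le> \<phi> (f x) * \<eta> x + \<phi> (- f x) * (1 - \<eta> x) - min_cond_risk \<phi> (\<eta> x)"
    and calib_0: "\<And>x. x \<in> XX \<Longrightarrow> \<eta> x \<in> {0..1} \<Longrightarrow>
        a * (1 - min (\<eta> x) (1 - \<eta> x)) \<le> \<phi> 0 - min_cond_risk \<phi> (\<eta> x)"
begin

definition attackable :: "((real ^ 'd) \<times> real) set" where
  "attackable = {z. \<exists>x'\<in>adv_ball XX eps (fst z). sgn01 (f x') \<noteq> snd z}"

text \<open>
  A measurable minorant of the adversarial \<open>\<phi>\<close>-loss on a measurable set \<open>S\<close> of attackable points, which
  cost at least \<open>\<phi> 0\<close>. Since \<open>XX\<close> need not be Borel, \<open>f\<close> is cut off outside a Borel subset \<open>B\<close> of \<open>XX\<close>.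
\<close>

definition attacked_loss :: "(real ^ 'd) set \<Rightarrow> ((real ^ 'd) \<times> real) set \<Rightarrow> (real ^ 'd) \<times> real \<Rightarrow> real"
  where "attacked_loss B S z =
    (let u = indicator B (fst z) * f (fst z) * snd z in if z \<in> S then max (\<phi> u) (\<phi> 0) else \<phi> u)"

lemma attacked_loss_nonneg: "0 \<le> attacked_loss B S z"
  using phi_nonneg by (simp add: attacked_loss_def Let_def le_max_iff_disj)

lemma borel_measurable_attacked_loss:
  assumes [measurable]: "B \<in> sets borel" "S \<in> sets borel" and "B \<subseteq> XX"
  shows "attacked_loss B S \<in> borel_measurable borel"
proof -
  have [measurable]: "\<phi> \<in> borel_measurable borel"
    using phi_cont by (rule borel_measurable_continuous_onI)
  have [measurable]: "(\<lambda>x. indicator B x * f x) \<in> borel_measurable borel"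
    using borel_measurable_continuous_on_indicator[OF assms(1) continuous_on_subset[OF f_cont \<open>B \<subseteq> XX\<close>]]
    by simp
  show ?thesis
    unfolding attacked_loss_def Let_def by measurable
qed

lemma nn_integral_attacked_loss_le_adv_loss:
  assumes "B \<subseteq> XX" "AE z in P. fst z \<in> B" "S \<subseteq> attackable"
  shows "(\<integral>\<^sup>+ z. ennreal (attacked_loss B S z) \<partial>P)
    \<le> (\<integral>\<^sup>+ z. (SUP x'\<in>adv_ball XX eps (fst z). ennreal (\<phi> (f x' * snd z))) \<partial>P)"
proof (rule nn_integral_mono_AE, use assms(2) labels in eventually_elim)
  case (elim z)
  then have "fst z \<in> adv_ball XX eps (fst z)"
    using \<open>B \<subseteq> XX\<close> eps_nonneg by (auto intro: self_mem_adv_ball)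
  then have "ennreal (\<phi> (f (fst z) * snd z)) \<le> (SUP x'\<in>adv_ball XX eps (fst z). ennreal (\<phi> (f x' * snd z)))"
    by (rule SUP_upper)
  moreover have "ennreal (\<phi> 0) \<le> (SUP x'\<in>adv_ball XX eps (fst z). ennreal (\<phi> (f x' * snd z)))" if "z \<in> S"
    using that \<open>S \<subseteq> attackable\<close> elim phi_antimono by (auto simp: attackable_def intro: phi_0_le_adv_loss)
  ultimately show ?case
    using elim by (auto simp: attacked_loss_def Let_def max_def)
qed

lemma attacked_loss_calibration:
  assumes "x \<in> B" "B \<subseteq> XX" "\<eta> x \<in> {0..1}"
  shows "min_cond_risk \<phi> (\<eta> x) + a * (\<eta> x * indicator S (x, 1) + (1 - \<eta> x) * indicator S (x, -1))
    \<le> \<eta> x * attacked_loss B S (x, 1) + (1 - \<eta> x) * attacked_loss B S (x, -1) + a * min (\<eta> x) (1 - \<eta> x)"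
proof -
  have "x \<in> XX"
    using assms by auto
  have "attacked_loss B S (x, 1) = (if (x, 1) \<in> S then max (\<phi> (f x)) (\<phi> 0) else \<phi> (f x))"
    "attacked_loss B S (x, -1) = (if (x, -1) \<in> S then max (\<phi> (- f x)) (\<phi> 0) else \<phi> (- f x))"
    using assms by (simp_all add: attacked_loss_def Let_def)
  moreover have "min_cond_risk \<phi> (\<eta> x)
        + a * (\<eta> x * of_bool ((x, 1) \<in> S) + (1 - \<eta> x) * of_bool ((x, -1) \<in> S))
      \<le> \<eta> x * (if (x, 1) \<in> S then max (\<phi> (f x)) (\<phi> 0) else \<phi> (f x))
        + (1 - \<eta> x) * (if (x, -1) \<in> S then max (\<phi> (- f x)) (\<phi> 0) else \<phi> (- f x))
        + a * min (\<eta> x) (1 - \<eta> x)"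
    by (rule calibrated_mixture_bound[OF _ _ a_nonneg calib_f[OF \<open>x \<in> XX\<close>] calib_0[OF \<open>x \<in> XX\<close>]])
       (use assms in \<open>auto intro: antimonoD[OF phi_antimono]\<close>)
  ultimately show ?thesis
    by (simp add: indicator_def)
qed

lemma min_cond_risk_add_attackable_le:
  assumes S[measurable]: "S \<in> sets P" and "S \<subseteq> attackable"
  shows "(\<integral>\<^sup>+ x. ennreal (min_cond_risk \<phi> (\<eta> x)) \<partial>PX) + ennreal a * emeasure P S
    \<le> (\<integral>\<^sup>+ z. (SUP x'\<in>adv_ball XX eps (fst z). ennreal (\<phi> (f x' * snd z))) \<partial>P)
      + ennreal a * (\<integral>\<^sup>+ x. ennreal (min (\<eta> x) (1 - \<eta> x)) \<partial>PX)"
proof -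
  have [measurable]: "min_cond_risk \<phi> \<in> borel_measurable borel"
    using phi_cont by (intro borel_measurable_min_cond_risk borel_measurable_continuous_onI)
  have [measurable]: "S \<in> sets borel"
    using S sets_P by simp
  obtain B where [measurable]: "B \<in> sets borel" and "B \<subseteq> XX"
    and AE_B: "AE z in P. fst z \<in> B" and AE_B_PX: "AE x in PX. x \<in> B"
    using AE_fst_in_borel_subset[OF P_X] by blast
  have [measurable]: "attacked_loss B S \<in> borel_measurable borel"
    using \<open>B \<subseteq> XX\<close> by (intro borel_measurable_attacked_loss) simp_all
  have "emeasure P S = (\<integral>\<^sup>+ x. ennreal (\<eta> x * indicator S (x, 1) + (1 - \<eta> x) * indicator S (x, -1)) \<partial>PX)"
    using S by (simp add: ennreal_indicator nn_integral_disintegrate_real[symmetric])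
  then have "(\<integral>\<^sup>+ x. ennreal (min_cond_risk \<phi> (\<eta> x)) \<partial>PX) + ennreal a * emeasure P S
      = (\<integral>\<^sup>+ x. ennreal (min_cond_risk \<phi> (\<eta> x)
          + a * (\<eta> x * indicator S (x, 1) + (1 - \<eta> x) * indicator S (x, -1))) \<partial>PX)"
    by (simp add: nn_integral_ennreal_add_scaled a_nonneg min_cond_risk_nonneg phi_nonneg
        eventually_mono[OF AE_eta_in_unit])
  also have "\<dots> \<le> (\<integral>\<^sup>+ x. ennreal (\<eta> x * attacked_loss B S (x, 1) + (1 - \<eta> x) * attacked_loss B S (x, -1)
      + a * min (\<eta> x) (1 - \<eta> x)) \<partial>PX)"
  proof (rule nn_integral_mono_AE, use AE_B_PX AE_eta_in_unit in eventually_elim)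
    case (elim x)
    then show ?case
      using attacked_loss_calibration[OF _ \<open>B \<subseteq> XX\<close>] by (intro ennreal_leI) simp
  qed
  also have "\<dots> = (\<integral>\<^sup>+ z. ennreal (attacked_loss B S z) \<partial>P)
      + ennreal a * (\<integral>\<^sup>+ x. ennreal (min (\<eta> x) (1 - \<eta> x)) \<partial>PX)"
    by (simp add: nn_integral_disintegrate_real attacked_loss_nonneg nn_integral_ennreal_add_scaled a_nonneg
        eventually_mono[OF AE_eta_in_unit])
  also have "\<dots> \<le> (\<integral>\<^sup>+ z. (SUP x'\<in>adv_ball XX eps (fst z). ennreal (\<phi> (f x' * snd z))) \<partial>P)
      + ennreal a * (\<integral>\<^sup>+ x. ennreal (min (\<eta> x) (1 - \<eta> x)) \<partial>PX)"
    using nn_integral_attacked_loss_le_adv_loss[OF \<open>B \<subseteq> XX\<close> AE_B \<open>S \<subseteq> attackable\<close>]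
    by (rule add_right_mono)
  finally show ?thesis .
qed

lemma adv_risk_calibration_bound:
  "enn2ereal (\<integral>\<^sup>+ x. ennreal (min_cond_risk \<phi> (\<eta> x)) \<partial>PX) + ereal a * adv_class_risk P XX f eps
    \<le> adv_risk P XX \<phi> f eps + ereal a * enn2ereal (\<integral>\<^sup>+ x. ennreal (min (\<eta> x) (1 - \<eta> x)) \<partial>PX)"
proof -
  let ?R = "\<integral>\<^sup>+ x. ennreal (min_cond_risk \<phi> (\<eta> x)) \<partial>PX"
  let ?X = "\<integral>\<^sup>+ z. (SUP x'\<in>adv_ball XX eps (fst z). ennreal (\<phi> (f x' * snd z))) \<partial>P"
  let ?E = "\<integral>\<^sup>+ x. ennreal (min (\<eta> x) (1 - \<eta> x)) \<partial>PX"
  have class_eq: "adv_class_risk P XX f eps = enn2ereal (\<integral>\<^sup>+ z. indicator attackable z \<partial>P)"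
    unfolding adv_class_risk_def attackable_def
    by (simp add: SUP_ennreal_of_bool indicator_def of_bool_def)
  \<comment> \<open>\<open>attackable\<close> need not be measurable, so pass to its measurable subsets.\<close>
  have "?R + ennreal a * (\<integral>\<^sup>+ z. indicator attackable z \<partial>P)
      \<le> ?R + ennreal a * (SUP S\<in>{S \<in> sets P. S \<subseteq> attackable}. emeasure P S)"
    by (intro add_left_mono mult_left_mono nn_integral_indicator_le_inner_measure) simp
  also have "\<dots> = (SUP S\<in>{S \<in> sets P. S \<subseteq> attackable}. ?R + ennreal a * emeasure P S)"
    by (subst (1 2) add.commute)
       (simp add: SUP_mult_left_ennreal ennreal_SUP_add_left[symmetric] exI[of _ "{}"])
  also have "\<dots> \<le> ?X + ennreal a * ?E"
    by (rule SUP_least) (auto intro: min_cond_risk_add_attackable_le)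
  finally show ?thesis
    unfolding class_eq adv_risk_def using a_nonneg
    by (simp add: less_eq_ennreal.rep_eq plus_ennreal.rep_eq times_ennreal.rep_eq)
qed

end

theorem lemmaA6:
  fixes P :: "((real ^ 'd) \<times> real) measure"
    and XX :: "(real ^ 'd) set"
    and \<phi> :: "real \<Rightarrow> real"
    and \<eta> :: "real ^ 'd \<Rightarrow> real"
    and eps a c \<beta> :: real and r :: nat
    and f :: "real ^ 'd \<Rightarrow> real"
  assumes XX_cube: "XX \<subseteq> unit_cube"
    and eps_pos: "eps > 0"
    and beta: "0 < \<beta>" "\<beta> \<le> 1"
    and P_prob: "prob_space P"
    and P_sets: "sets P = sets borel"
    and P_X: "AE z in P. fst z \<in> XX"
    and P_Y: "AE z in P. snd z \<in> {-1, 1}"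
    and eta_meas: "\<eta> \<in> borel_measurable borel"
    and eta_cond: "\<And>A. A \<in> sets borel \<Longrightarrow>
        measure P {z \<in> space P. fst z \<in> A \<and> snd z = 1} = (LINT x:A | distr P borel fst. \<eta> x)"
    and phi_nonneg: "\<And>u. \<phi> u \<ge> 0"
    and phi_cont: "continuous_on UNIV \<phi>"
    and phi_decr: "antimono \<phi>"
    and a_pos: "a > 0" and c_pos: "c > 0"
    and calib1: "\<And>x g e. x \<in> XX \<Longrightarrow> continuous_on XX g \<Longrightarrow> e \<in> {0..1} \<Longrightarrow>
        C_phi \<phi> e x g - C_phi_star \<phi> e x \<ge> a * (C_class e x g - C_class_star e x)"
    and calib2: "\<And>x e. x \<in> XX \<Longrightarrow> e \<in> {0..1} \<Longrightarrow> \<bar>e - 1/2\<bar> > c \<Longrightarrow>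
        \<phi> 0 - C_phi_star \<phi> e x \<ge> a * (1 - C_class_star e x)"
    and eta_margin: "\<And>x. x \<in> XX \<Longrightarrow> \<bar>\<eta> x - 1/2\<bar> > c"
    and f_cont: "continuous_on XX f"
  shows "adv_risk P XX \<phi> f eps - (INF g\<in>holder_ball r \<beta>. adv_risk P XX \<phi> g eps)
      \<ge> ereal a * (adv_class_risk P XX f eps - class_risk_star P)
         - (INF g\<in>holder_ball r \<beta>. adv_risk P XX \<phi> g eps) + risk_star P \<phi>"
proof -
  have C_star: "C_phi_star \<phi> e x = min_cond_risk \<phi> e" if "e \<in> {0..1}" for e x
    using C_phi_star_eq_min_cond_risk[OF phi_cont phi_nonneg that] .
  have "regression_function P \<eta>"
    by (rule regression_function.intro) fact+
  interpret calibrated_adversarial_setting P \<eta> XX eps a \<phi> f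
  proof (intro calibrated_adversarial_setting.intro regression_function_vector.intro
      calibrated_adversarial_setting_axioms.intro)
    fix x assume x: "x \<in> XX" "\<eta> x \<in> {0..1}"
    show "a * ((if f x < 0 then \<eta> x else 1 - \<eta> x) - min (\<eta> x) (1 - \<eta> x))
        \<le> \<phi> (f x) * \<eta> x + \<phi> (- f x) * (1 - \<eta> x) - min_cond_risk \<phi> (\<eta> x)"
      using calib1[OF x(1) f_cont x(2)] unfolding C_star[OF x(2)]
      by (cases "f x < 0") (simp_all add: C_phi_def C_class_def C_class_star_def)
    show "a * (1 - min (\<eta> x) (1 - \<eta> x)) \<le> \<phi> 0 - min_cond_risk \<phi> (\<eta> x)"
      using calib2[OF x eta_margin[OF x(1)]] unfolding C_star[OF x(2)] by (simp add: C_class_star_def)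
  qed (use \<open>regression_function P \<eta>\<close> P_X eps_pos phi_cont phi_nonneg phi_decr a_pos f_cont in auto)
  show ?thesis
  proof (rule ereal_excess_rearrange[OF adv_risk_calibration_bound risk_star_nonneg
        risk_star_le_nn_integral_min_cond_risk[OF phi_cont phi_nonneg] _ _
        nn_integral_min_eta_le_class_risk_star class_risk_star_le_1 _ adv_class_risk_le_1 a_pos])
    show "enn2ereal (\<integral>\<^sup>+ x. ennreal (min_cond_risk \<phi> (\<eta> x)) \<partial>PX) \<noteq> \<infinity>"
      using nn_integral_min_cond_risk_finite[of \<phi>, OF phi_nonneg] by simp
  qed (simp_all add: adv_class_risk_def adv_risk_def INF_greatest)
qed

end
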